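(* Let $m\ge4$ and let $g(x_1,x_2,x_3)=a_1(cx_1+\alpha_1)^2+a_2(cx_2+\alpha_2)^2+a_3(cx_3+\alpha_3)^2$ be a tight regular complete quadratic polynomial where $a_1,a_2,a_3$ are positive integers with $\gcd(a_1,a_2,a_3)=1$ and $a_1\le a_2\le a_3$, the lattice $\langle a_1,a_2,a_3\rangle$ is $p$-stable for every prime $p\nmid c$, $\alpha_i\in\mathbb{Z}$ with $0<\alpha_i<c/2$ for $i=1,2,3$, and $\gcd(c,\alpha_1\alpha_2\alpha_3)=1$. For $n\in\mathbb{Z}_{\ge0}$ let $\beta(n)=\delta cn+a_1\alpha_1^2+a_2\alpha_2^2+a_3\alpha_3^2$. Then: (i) $\min(g)=a_1\alpha_1^2+a_2\alpha_2^2+a_3\alpha_3^2$; (ii) for every prime divisor $p$ of $c$ and every $n\in\mathbb{Z}_{\ge0}$, $\beta(n)$ is represented by $g$ over $\mathbb{Z}_p$; (iii) for every prime $p$ not dividing $c$ and every $n\in\mathbb{Z}_{\ge0}$, $\beta(n)$ is represented by $g$ over $\mathbb{Z}_p$ if and only if $\beta(n)$ is represented by the $\mathbb{Z}$-lattice $\langle a_1,a_2,a_3\rangle$ over $\mathbb{Z}_p$.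
   Context: Define $\delta=4$ if $m$ is odd, $\delta=2$ if $m\equiv2\pmod4$, $\delta=1$ if $m\equiv0\pmod4$, and $c=\delta\frac{m-2}{2}$. An integer $n$ is represented by $g$ over $R\in\{\mathbb{Z},\mathbb{Z}_p,\mathbb{R}\}$ if $g(\mathbf{x})=n$ for some $\mathbf{x}\in R^3$; locally represented means represented over every $\mathbb{Z}_p$ and over $\mathbb{R}$. $\min(g)=\min\{g(\mathbf{x}):\mathbf{x}\in\mathbb{Z}^3\}$; $g$ is tight regular if it represents over $\mathbb{Z}$ every locally represented integer $\ge\min(g)$. $\langle a_1,a_2,a_3\rangle$ is the lattice with form $a_1x_1^2+a_2x_2^2+a_3x_3^2$. For an odd prime $p$ with nonsquare unit $\Delta_p$, a diagonal ternary lattice $K$ is $p$-stable if $\langle1,-1\rangle$ is represented by $K\otimes\mathbb{Z}_p$ or $K\otimes\mathbb{Z}_p\cong\langle1,-\Delta_p\rangle\perp\langle p\epsilon\rangle$ with $\epsilon\in\mathbb{Z}_p^\times$; $K$ is $2$-stable if $K\otimes\mathbb{Z}_2$ is unimodular or $\langle1,3\rangle$ or $\langle1,7\rangle$ is represented by $K\otimes\mathbb{Z}_2$. *)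

theory Defs
  imports "HOL-Number_Theory.Number_Theory" Complex_Main
begin

definition delta :: "int \<Rightarrow> int" where
  "delta m = (if odd m then 4 else if m mod 4 = 2 then 2 else 1)"

definition cpar :: "int \<Rightarrow> int" where
  "cpar m = delta m * (m - 2) div 2"

definition gpol :: "int \<Rightarrow> int \<Rightarrow> int \<Rightarrow> int \<Rightarrow> int \<Rightarrow> int \<Rightarrow> int \<Rightarrow>
    'a::comm_ring_1 \<Rightarrow> 'a \<Rightarrow> 'a \<Rightarrow> 'a" where
  "gpol a1 a2 a3 c al1 al2 al3 x1 x2 x3 =
     of_int a1 * (of_int c * x1 + of_int al1)^2
   + of_int a2 * (of_int c * x2 + of_int al2)^2
   + of_int a3 * (of_int c * x3 + of_int al3)^2"

text \<open>An element of Z_p is a sequence x with x (k+1) = x k (mod p^k); x k represents the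
  residue of the p-adic integer modulo p^k. Ring operations (and polynomials with integer
  coefficients) are computed levelwise.\<close>

type_synonym zp = "nat \<Rightarrow> int"

definition zp_mem :: "int \<Rightarrow> zp \<Rightarrow> bool" where
  "zp_mem p x \<longleftrightarrow> (\<forall>k. [x (Suc k) = x k] (mod p ^ k))"

definition zp_eq :: "int \<Rightarrow> zp \<Rightarrow> zp \<Rightarrow> bool" where
  "zp_eq p x y \<longleftrightarrow> (\<forall>k. [x k = y k] (mod p ^ k))"

definition zp_unit :: "int \<Rightarrow> zp \<Rightarrow> bool" where
  "zp_unit p x \<longleftrightarrow> zp_mem p x \<and> (\<exists>y. zp_mem p y \<and> zp_eq p (\<lambda>k. x k * y k) (\<lambda>_. 1))"

definition zp_square :: "int \<Rightarrow> zp \<Rightarrow> bool" where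
  "zp_square p x \<longleftrightarrow> (\<exists>y. zp_mem p y \<and> zp_eq p (\<lambda>k. y k ^ 2) x)"

type_synonym zp3 = "zp \<times> zp \<times> zp"

definition zp3_mem :: "int \<Rightarrow> zp3 \<Rightarrow> bool" where
  "zp3_mem p v \<longleftrightarrow> (case v of (x1, x2, x3) \<Rightarrow> zp_mem p x1 \<and> zp_mem p x2 \<and> zp_mem p x3)"

definition rep_Z_g :: "int \<Rightarrow> int \<Rightarrow> int \<Rightarrow> int \<Rightarrow> int \<Rightarrow> int \<Rightarrow> int \<Rightarrow> int \<Rightarrow> bool" where
  "rep_Z_g a1 a2 a3 c al1 al2 al3 n \<longleftrightarrow>
     (\<exists>x1 x2 x3 :: int. gpol a1 a2 a3 c al1 al2 al3 x1 x2 x3 = n)"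

definition rep_Zp_g :: "int \<Rightarrow> int \<Rightarrow> int \<Rightarrow> int \<Rightarrow> int \<Rightarrow> int \<Rightarrow> int \<Rightarrow> int \<Rightarrow> int \<Rightarrow> bool" where
  "rep_Zp_g p a1 a2 a3 c al1 al2 al3 n \<longleftrightarrow>
     (\<exists>x1 x2 x3. zp_mem p x1 \<and> zp_mem p x2 \<and> zp_mem p x3 \<and>
        zp_eq p (\<lambda>k. gpol a1 a2 a3 c al1 al2 al3 (x1 k) (x2 k) (x3 k)) (\<lambda>_. n))"

definition rep_R_g :: "int \<Rightarrow> int \<Rightarrow> int \<Rightarrow> int \<Rightarrow> int \<Rightarrow> int \<Rightarrow> int \<Rightarrow> int \<Rightarrow> bool" where
  "rep_R_g a1 a2 a3 c al1 al2 al3 n \<longleftrightarrow>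
     (\<exists>x1 x2 x3 :: real. gpol a1 a2 a3 c al1 al2 al3 x1 x2 x3 = real_of_int n)"

definition loc_rep_g :: "int \<Rightarrow> int \<Rightarrow> int \<Rightarrow> int \<Rightarrow> int \<Rightarrow> int \<Rightarrow> int \<Rightarrow> int \<Rightarrow> bool" where
  "loc_rep_g a1 a2 a3 c al1 al2 al3 n \<longleftrightarrow>
     (\<forall>p. prime p \<longrightarrow> rep_Zp_g p a1 a2 a3 c al1 al2 al3 n) \<and> rep_R_g a1 a2 a3 c al1 al2 al3 n"

definition min_g :: "int \<Rightarrow> int \<Rightarrow> int \<Rightarrow> int \<Rightarrow> int \<Rightarrow> int \<Rightarrow> int \<Rightarrow> int" where
  "min_g a1 a2 a3 c al1 al2 al3 =
     Inf {gpol a1 a2 a3 c al1 al2 al3 x1 x2 x3 | x1 x2 x3 :: int. True}"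

definition tight_regular_g :: "int \<Rightarrow> int \<Rightarrow> int \<Rightarrow> int \<Rightarrow> int \<Rightarrow> int \<Rightarrow> int \<Rightarrow> bool" where
  "tight_regular_g a1 a2 a3 c al1 al2 al3 \<longleftrightarrow>
     (\<forall>n. loc_rep_g a1 a2 a3 c al1 al2 al3 n \<and> n \<ge> min_g a1 a2 a3 c al1 al2 al3
          \<longrightarrow> rep_Z_g a1 a2 a3 c al1 al2 al3 n)"

definition lat_B :: "int \<Rightarrow> int \<Rightarrow> int \<Rightarrow> zp3 \<Rightarrow> zp3 \<Rightarrow> zp" where
  "lat_B a1 a2 a3 v w = (case v of (x1, x2, x3) \<Rightarrow> case w of (y1, y2, y3) \<Rightarrow>
     (\<lambda>k. a1 * x1 k * y1 k + a2 * x2 k * y2 k + a3 * x3 k * y3 k))"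

definition det3 :: "zp3 \<Rightarrow> zp3 \<Rightarrow> zp3 \<Rightarrow> zp" where
  "det3 u v w = (case u of (u1, u2, u3) \<Rightarrow> case v of (v1, v2, v3) \<Rightarrow> case w of (w1, w2, w3) \<Rightarrow>
     (\<lambda>k. u1 k * (v2 k * w3 k - v3 k * w2 k) - u2 k * (v1 k * w3 k - v3 k * w1 k)
          + u3 k * (v1 k * w2 k - v2 k * w1 k)))"

definition lat_rep_Zp :: "int \<Rightarrow> int \<Rightarrow> int \<Rightarrow> int \<Rightarrow> int \<Rightarrow> bool" where
  "lat_rep_Zp p a1 a2 a3 n \<longleftrightarrow>
     (\<exists>v. zp3_mem p v \<and> zp_eq p (lat_B a1 a2 a3 v v) (\<lambda>_. n))"

text \<open>The binary lattice <b1,b2> is represented by <a1,a2,a3> tensor Z_p: there is an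
  isometric Z_p-linear map, i.e. images v, w of the basis with the right Gram matrix
  (the Gram matrix diag(b1,b2) is nondegenerate, so the map is injective).\<close>
definition lat_rep_bin_Zp :: "int \<Rightarrow> int \<Rightarrow> int \<Rightarrow> int \<Rightarrow> int \<Rightarrow> int \<Rightarrow> bool" where
  "lat_rep_bin_Zp p a1 a2 a3 b1 b2 \<longleftrightarrow>
     (\<exists>v w. zp3_mem p v \<and> zp3_mem p w \<and>
        zp_eq p (lat_B a1 a2 a3 v v) (\<lambda>_. b1) \<and>
        zp_eq p (lat_B a1 a2 a3 w w) (\<lambda>_. b2) \<and>
        zp_eq p (lat_B a1 a2 a3 v w) (\<lambda>_. 0))"

text \<open><a1,a2,a3> tensor Z_p is isometric to <1,-Delta> perp <p eps>: it has a Z_p-basis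
  (determinant of the change of basis a unit) with Gram matrix diag(1, -Delta, p eps).\<close>
definition lat_iso_Zp :: "int \<Rightarrow> int \<Rightarrow> int \<Rightarrow> int \<Rightarrow> zp \<Rightarrow> zp \<Rightarrow> zp \<Rightarrow> bool" where
  "lat_iso_Zp p a1 a2 a3 d1 d2 d3 \<longleftrightarrow>
     (\<exists>u v w. zp3_mem p u \<and> zp3_mem p v \<and> zp3_mem p w \<and> zp_unit p (det3 u v w) \<and>
        zp_eq p (lat_B a1 a2 a3 u u) d1 \<and> zp_eq p (lat_B a1 a2 a3 v v) d2 \<and>
        zp_eq p (lat_B a1 a2 a3 w w) d3 \<and>
        zp_eq p (lat_B a1 a2 a3 u v) (\<lambda>_. 0) \<and> zp_eq p (lat_B a1 a2 a3 u w) (\<lambda>_. 0) \<and>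
        zp_eq p (lat_B a1 a2 a3 v w) (\<lambda>_. 0))"

definition lat_unimodular_Zp :: "int \<Rightarrow> int \<Rightarrow> int \<Rightarrow> int \<Rightarrow> bool" where
  "lat_unimodular_Zp p a1 a2 a3 \<longleftrightarrow> zp_unit p (\<lambda>_. a1 * a2 * a3)"

definition p_stable :: "int \<Rightarrow> int \<Rightarrow> int \<Rightarrow> int \<Rightarrow> bool" where
  "p_stable p a1 a2 a3 \<longleftrightarrow>
     (if p = 2 then
        lat_unimodular_Zp 2 a1 a2 a3 \<or> lat_rep_bin_Zp 2 a1 a2 a3 1 3 \<or> lat_rep_bin_Zp 2 a1 a2 a3 1 7
      else
        lat_rep_bin_Zp p a1 a2 a3 1 (-1) \<or>
        (\<exists>Delta eps. zp_unit p Delta \<and> \<not> zp_square p Delta \<and> zp_unit p eps \<and>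
           lat_iso_Zp p a1 a2 a3 (\<lambda>_. 1) (\<lambda>k. - Delta k) (\<lambda>k. p * eps k)))"

end

theory Submission imports Defs begin

text \<open>
  (i) Since 0 < al < c/2, every integer x satisfies |c x + al| \<ge> al, so g is minimal at x = 0.

  (ii) A prime p dividing c does not divide some a_i, nor any al_i. Put the other two
  coordinates to 0 and substitute x = t y, with t chosen according to m mod 4: the equation
  a_i (c x + al_i)^2 = a_i al_i^2 + delta c n becomes delta c (A y^2 + B y - n) = 0 with
  p dividing A but not B. Then y \<mapsto> A y^2 + B y is injective, hence bijective, modulo every
  p^k, and the unique solutions modulo the p^k form a p-adic integer.

  (iii) For p not dividing c, c is a unit of Z_p, so x \<mapsto> c x + al is a bijection of Z_p^3
  transforming g into a1 x1^2 + a2 x2^2 + a3 x3^2.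
\<close>

lemma shifted_square_ge:
  fixes c x al :: int
  assumes "0 \<le> al" "2 * al \<le> c"
  shows "al^2 \<le> (c * x + al)^2"
proof -
  consider "x = 0" | "x \<ge> 1" | "x \<le> -1" by linarith
  then have "al \<le> \<bar>c * x + al\<bar>"
  proof cases
    case 2
    then have "c \<le> c * x" using assms by (simp add: mult_le_cancel_left1)
    then show ?thesis using assms by simp
  next
    case 3
    then have "c * x \<le> c * (- 1)" using assms by (intro mult_left_mono) auto
    then show ?thesis using assms by simp
  qed simp
  then show ?thesis using assms by (simp add: abs_le_square_iff [symmetric])
qed

lemma min_g_eq:
  assumes "0 \<le> a1" "0 \<le> a2" "0 \<le> a3"
    and "0 \<le> al1" "2 * al1 \<le> c" "0 \<le> al2" "2 * al2 \<le> c" "0 \<le> al3" "2 * al3 \<le> c"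
  shows "min_g a1 a2 a3 c al1 al2 al3 = a1 * al1^2 + a2 * al2^2 + a3 * al3^2"
  unfolding min_g_def
proof (rule cInf_eq_minimum)
  have "gpol a1 a2 a3 c al1 al2 al3 0 0 0 = a1 * al1^2 + a2 * al2^2 + a3 * al3^2"
    by (simp add: gpol_def)
  then show "a1 * al1^2 + a2 * al2^2 + a3 * al3^2
      \<in> {gpol a1 a2 a3 c al1 al2 al3 x1 x2 x3 | x1 x2 x3 :: int. True}"
    unfolding mem_Collect_eq by (intro exI[of _ "0::int"]) simp
next
  fix v assume "v \<in> {gpol a1 a2 a3 c al1 al2 al3 x1 x2 x3 | x1 x2 x3 :: int. True}"
  then obtain x1 x2 x3 :: int where v: "v = gpol a1 a2 a3 c al1 al2 al3 x1 x2 x3" by blast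
  have "a1 * al1^2 \<le> a1 * (c * x1 + al1)^2" "a2 * al2^2 \<le> a2 * (c * x2 + al2)^2"
    "a3 * al3^2 \<le> a3 * (c * x3 + al3)^2"
    using assms shifted_square_ge by (auto intro: mult_left_mono)
  then show "a1 * al1^2 + a2 * al2^2 + a3 * al3^2 \<le> v"
    unfolding v gpol_def by simp
qed

lemma quadratic_cong_cancel:
  fixes p A B y z :: int
  assumes "p dvd A" "coprime B p"
    and "[A * y^2 + B * y = A * z^2 + B * z] (mod p^k)"
  shows "[y = z] (mod p^k)"
proof -
  have factor: "A * y^2 + B * y - (A * z^2 + B * z) = (y - z) * (A * (y + z) + B)"
    by (simp add: algebra_simps power2_eq_square)
  have "[A * (y + z) + B = B] (mod p)"
    using assms(1) by (simp add: cong_iff_dvd_diff)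
  then have "coprime (A * (y + z) + B) p"
    using assms(2) by (metis cong_imp_coprime cong_sym)
  then have "coprime (A * (y + z) + B) (p^k)" by simp
  moreover have "p^k dvd (y - z) * (A * (y + z) + B)"
    using assms(3) factor by (simp add: cong_iff_dvd_diff)
  ultimately show ?thesis
    by (simp add: cong_iff_dvd_diff coprime_commute coprime_dvd_mult_left_iff)
qed

lemma quadratic_solvable_mod_power:
  fixes p A B N :: int
  assumes "0 < p" "p dvd A" "coprime B p"
  shows "\<exists>y. [A * y^2 + B * y = N] (mod p^k)"
proof -
  define M where "M = p^k"
  define h where "h y = (A * y^2 + B * y) mod M" for y
  have "M > 0" using assms(1) by (simp add: M_def)
  then have maps_to: "h ` {0..<M} \<subseteq> {0..<M}" by (auto simp: h_def)
  have "inj_on h {0..<M}"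
  proof
    fix y z assume "y \<in> {0..<M}" "z \<in> {0..<M}" "h y = h z"
    then have "[A * y^2 + B * y = A * z^2 + B * z] (mod p^k)"
      by (simp add: h_def M_def cong_def)
    then have "[y = z] (mod M)"
      unfolding M_def by (rule quadratic_cong_cancel[OF assms(2,3)])
    with \<open>y \<in> {0..<M}\<close> \<open>z \<in> {0..<M}\<close> show "y = z" by (simp add: cong_def)
  qed
  with maps_to have "h ` {0..<M} = {0..<M}" by (intro endo_inj_surj) simp_all
  moreover have "N mod M \<in> {0..<M}" using \<open>M > 0\<close> by simp
  ultimately obtain y where "h y = N mod M" by (metis imageE)
  then show ?thesis by (auto simp: h_def M_def cong_def)
qed

lemma quadratic_solvable_zp:
  fixes p A B N :: int
  assumes "0 < p" "p dvd A" "coprime B p"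
  shows "\<exists>y. zp_mem p y \<and> (\<forall>k. [A * y k ^ 2 + B * y k = N] (mod p^k))"
proof -
  define y where "y k = (SOME y. [A * y^2 + B * y = N] (mod p^k))" for k
  have sol: "[A * y k ^ 2 + B * y k = N] (mod p^k)" for k
    unfolding y_def by (rule someI_ex) (rule quadratic_solvable_mod_power[OF assms])
  have "zp_mem p y" unfolding zp_mem_def
  proof
    fix k
    have "[A * y (Suc k) ^ 2 + B * y (Suc k) = N] (mod p^k)"
      using sol[of "Suc k"] by (rule cong_dvd_modulus) (simp add: le_imp_power_dvd)
    then have "[A * y (Suc k) ^ 2 + B * y (Suc k) = A * y k ^ 2 + B * y k] (mod p^k)"
      using sol[of k] by (metis cong_sym cong_trans)
    then show "[y (Suc k) = y k] (mod p^k)"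
      using quadratic_cong_cancel[OF assms(2,3)] by blast
  qed
  with sol show ?thesis by blast
qed

lemma zp_inverse_exists:
  fixes p c :: int
  assumes "0 < p" "coprime c p"
  shows "\<exists>u. zp_mem p u \<and> (\<forall>k. [c * u k = 1] (mod p^k))"
  using quadratic_solvable_zp[OF assms(1) _ assms(2), of 0 1] by simp

lemma shifted_square_solvable_zp:
  fixes p A B a c al t K N :: int
  assumes "0 < p" "p dvd A" "coprime B p"
    and "a * (c * t)^2 = K * A" "2 * a * c * al * t = K * B"
  shows "\<exists>x. zp_mem p x \<and> (\<forall>k. [a * (c * x k + al)^2 = a * al^2 + K * N] (mod p^k))"
proof -
  obtain y where y: "zp_mem p y" "\<forall>k. [A * y k ^ 2 + B * y k = N] (mod p^k)"
    using quadratic_solvable_zp[OF assms(1-3)] by blast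
  have expand: "a * (c * (t * z) + al)^2 = K * (A * z^2 + B * z) + a * al^2" for z
  proof -
    have "a * (c * (t * z) + al)^2 = a * (c * t)^2 * z^2 + 2 * a * c * al * t * z + a * al^2"
      by (simp add: algebra_simps power2_eq_square)
    also have "\<dots> = K * A * z^2 + K * B * z + a * al^2"
      by (simp only: assms(4,5))
    finally show ?thesis by (simp add: algebra_simps)
  qed
  show ?thesis
  proof (intro exI conjI allI)
    show "zp_mem p (\<lambda>k. t * y k)"
      using y(1) by (simp add: zp_mem_def cong_scalar_left)
    fix k
    have "[K * (A * y k ^ 2 + B * y k) + a * al^2 = K * N + a * al^2] (mod p^k)"
      using y(2) by (simp add: cong_add cong_scalar_left)
    then show "[a * (c * (t * y k) + al)^2 = a * al^2 + K * N] (mod p^k)"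
      unfolding expand by (metis add.commute)
  qed
qed

text \<open>The case split on m mod 4 matters for p = 2: the factor 2 of the linear coefficient
  2 a c al t must be absorbed by t or by delta m for B to stay odd.\<close>

lemma cpar_substitution_exists:
  fixes p m a al :: int
  assumes "prime p" "p dvd cpar m" "coprime a p" "coprime al p"
  obtains t A B where "p dvd A" "coprime B p"
    "a * (cpar m * t)^2 = delta m * cpar m * A" "2 * a * cpar m * al * t = delta m * cpar m * B"
proof -
  define c where "c = cpar m"
  have pc: "p dvd c" using assms(2) by (simp add: c_def)
  have "odd m \<or> m mod 4 = 2 \<or> m mod 4 = 0" by presburger
  then show ?thesis
  proof (elim disjE)
    assume "odd m"
    then have "delta m = 4" "c = 2 * (m - 2)" by (simp_all add: c_def cpar_def delta_def)
    then show ?thesis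
      using that[of "a * c" "a * al" 2] pc assms(3,4)
      by (simp add: c_def power2_eq_square algebra_simps)
  next
    assume m2: "m mod 4 = 2"
    then have dc: "delta m = 2" "c = m - 2" "c = 2 * (c div 2)"
      by (simp_all add: c_def cpar_def delta_def) presburger+
    have "p dvd c div 2"
    proof (cases "p = 2")
      case True
      then show ?thesis using m2 dc(2) by presburger
    next
      case False
      then have "\<not> p dvd 2"
        using primes_dvd_imp_eq[OF assms(1) two_is_prime] by auto
      then show ?thesis using pc dc(3) prime_dvd_mult_iff[OF assms(1)] by metis
    qed
    then show ?thesis
      using that[of "a * (c div 2)" "a * al" 1] assms(3,4) dc
      by (simp add: c_def power2_eq_square algebra_simps)
  next
    assume m0: "m mod 4 = 0"
    then have dc: "delta m = 1" "c = (m - 2) div 2"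
      by (simp_all add: c_def cpar_def delta_def) presburger+
    then have "odd c" using m0 by presburger
    then have "coprime 2 p" using pc dvd_trans by auto
    then show ?thesis
      using that[of "a * c" "2 * a * al" 1] pc assms(3,4) dc
      by (simp add: c_def power2_eq_square algebra_simps)
  qed
qed

lemma cpar_shifted_square_solvable_zp:
  fixes p m a al n :: int
  assumes "prime p" "p dvd cpar m" "coprime a p" "coprime al p"
  shows "\<exists>x. zp_mem p x \<and>
    (\<forall>k. [a * (cpar m * x k + al)^2 = a * al^2 + delta m * cpar m * n] (mod p^k))"
proof -
  obtain t A B where "p dvd A" "coprime B p"
    "a * (cpar m * t)^2 = delta m * cpar m * A" "2 * a * cpar m * al * t = delta m * cpar m * B"
    using cpar_substitution_exists[OF assms] .
  with prime_gt_0_int[OF assms(1)] show ?thesis by (rule shifted_square_solvable_zp)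
qed

lemma zp_mem_zero: "zp_mem p (\<lambda>_. 0)"
  by (simp add: zp_mem_def)

lemma rep_Zp_g_first_coordinate:
  fixes p a1 a2 a3 c al1 al2 al3 N :: int
  assumes "zp_mem p x" "\<forall>k. [a1 * (c * x k + al1)^2 = a1 * al1^2 + N] (mod p^k)"
  shows "rep_Zp_g p a1 a2 a3 c al1 al2 al3 (N + a1 * al1^2 + a2 * al2^2 + a3 * al3^2)"
proof -
  have "[gpol a1 a2 a3 c al1 al2 al3 (x k) 0 0 = N + a1 * al1^2 + a2 * al2^2 + a3 * al3^2] (mod p^k)"
    for k
  proof -
    have "[a1 * (c * x k + al1)^2 + (a2 * al2^2 + a3 * al3^2)
        = (a1 * al1^2 + N) + (a2 * al2^2 + a3 * al3^2)] (mod p^k)"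
      using assms(2) by (simp add: cong_add)
    then show ?thesis by (simp add: gpol_def algebra_simps)
  qed
  then show ?thesis
    unfolding rep_Zp_g_def zp_eq_def using assms(1) zp_mem_zero by blast
qed

lemma gpol_rotate:
  "gpol a1 a2 a3 c al1 al2 al3 x1 x2 x3 = gpol a2 a3 a1 c al2 al3 al1 x2 x3 x1"
  by (simp add: gpol_def add_ac)

lemma rep_Zp_g_rotate:
  "rep_Zp_g p a1 a2 a3 c al1 al2 al3 N = rep_Zp_g p a2 a3 a1 c al2 al3 al1 N"
  unfolding rep_Zp_g_def gpol_rotate[of a1] by blast

lemma rep_Zp_g_beta_of_prime_dvd_cpar:
  fixes p m a1 a2 a3 al1 al2 al3 n :: int
  assumes "prime p" "p dvd cpar m" "gcd a1 (gcd a2 a3) = 1" "gcd (cpar m) (al1 * al2 * al3) = 1"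
  shows "rep_Zp_g p a1 a2 a3 (cpar m) al1 al2 al3
    (delta m * cpar m * n + a1 * al1^2 + a2 * al2^2 + a3 * al3^2)"
proof -
  have coordinate: "rep_Zp_g p b1 b2 b3 (cpar m) be1 be2 be3
      (delta m * cpar m * n + b1 * be1^2 + b2 * be2^2 + b3 * be3^2)"
    if coprime: "coprime b1 p" "coprime be1 p" for b1 b2 b3 be1 be2 be3
  proof -
    obtain x where "zp_mem p x"
      "\<forall>k. [b1 * (cpar m * x k + be1)^2 = b1 * be1^2 + delta m * cpar m * n] (mod p^k)"
      using cpar_shifted_square_solvable_zp[OF assms(1,2) coprime] by blast
    then show ?thesis by (rule rep_Zp_g_first_coordinate)
  qed
  have coprime_if_not_dvd: "coprime x p" if "\<not> p dvd x" for x
    using prime_imp_coprime[OF assms(1) that] by (simp add: ac_simps)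
  have "\<not> p dvd 1" using assms(1) not_prime_unit by blast
  then have "\<not> p dvd gcd a1 (gcd a2 a3)" "\<not> p dvd gcd (cpar m) (al1 * al2 * al3)"
    using assms(3,4) by simp_all
  then have "\<not> p dvd a1 \<or> \<not> p dvd a2 \<or> \<not> p dvd a3" "\<not> p dvd al1 * al2 * al3"
    using assms(2) by simp_all
  then have some_a: "coprime a1 p \<or> coprime a2 p \<or> coprime a3 p"
    and "coprime (al1 * al2 * al3) p"
    using coprime_if_not_dvd by blast+
  then have al: "coprime al1 p" "coprime al2 p" "coprime al3 p" by simp_all
  from some_a show ?thesis
  proof (elim disjE)
    assume "coprime a1 p"
    then show ?thesis using coordinate al by blast
  next
    assume "coprime a2 p"
    then have "rep_Zp_g p a2 a3 a1 (cpar m) al2 al3 al1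
        (delta m * cpar m * n + a2 * al2^2 + a3 * al3^2 + a1 * al1^2)"
      using coordinate al by blast
    then show ?thesis unfolding rep_Zp_g_rotate[of p a1] by (simp only: ac_simps)
  next
    assume "coprime a3 p"
    then have "rep_Zp_g p a3 a1 a2 (cpar m) al3 al1 al2
        (delta m * cpar m * n + a3 * al3^2 + a1 * al1^2 + a2 * al2^2)"
      using coordinate al by blast
    then show ?thesis unfolding rep_Zp_g_rotate[of p a3] by (simp only: ac_simps)
  qed
qed

lemma zp_mem_affine: "zp_mem p x \<Longrightarrow> zp_mem p (\<lambda>k. c * x k + d)"
  by (simp add: zp_mem_def cong_add cong_scalar_left)

lemma lat_B_diagonal:
  "lat_B a1 a2 a3 (y1, y2, y3) (y1, y2, y3) = (\<lambda>k. a1 * y1 k^2 + a2 * y2 k^2 + a3 * y3 k^2)"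
  by (simp add: lat_B_def power2_eq_square mult.assoc)

lemma gpol_cong:
  fixes M :: int
  assumes "[c * x1 + al1 = y1] (mod M)" "[c * x2 + al2 = y2] (mod M)" "[c * x3 + al3 = y3] (mod M)"
  shows "[gpol a1 a2 a3 c al1 al2 al3 x1 x2 x3 = a1 * y1^2 + a2 * y2^2 + a3 * y3^2] (mod M)"
  unfolding gpol_def using assms by (simp add: cong_add cong_mult cong_pow)

lemma rep_Zp_g_iff_lat_rep_Zp:
  fixes p c a1 a2 a3 al1 al2 al3 N :: int
  assumes "0 < p" "coprime c p"
  shows "rep_Zp_g p a1 a2 a3 c al1 al2 al3 N \<longleftrightarrow> lat_rep_Zp p a1 a2 a3 N"
proof
  assume "rep_Zp_g p a1 a2 a3 c al1 al2 al3 N"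
  then obtain x1 x2 x3 where x: "zp_mem p x1" "zp_mem p x2" "zp_mem p x3"
    and eq: "zp_eq p (\<lambda>k. gpol a1 a2 a3 c al1 al2 al3 (x1 k) (x2 k) (x3 k)) (\<lambda>_. N)"
    unfolding rep_Zp_g_def by blast
  define v where "v = ((\<lambda>k. c * x1 k + al1), (\<lambda>k. c * x2 k + al2), (\<lambda>k. c * x3 k + al3))"
  have "zp3_mem p v" using x zp_mem_affine by (simp add: v_def zp3_mem_def)
  moreover have "zp_eq p (lat_B a1 a2 a3 v v) (\<lambda>_. N)"
    using eq by (simp add: v_def lat_B_diagonal gpol_def)
  ultimately show "lat_rep_Zp p a1 a2 a3 N" unfolding lat_rep_Zp_def by blast
next
  assume "lat_rep_Zp p a1 a2 a3 N"
  then obtain y1 y2 y3 where y: "zp_mem p y1" "zp_mem p y2" "zp_mem p y3"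
    and eq: "\<forall>k. [a1 * y1 k^2 + a2 * y2 k^2 + a3 * y3 k^2 = N] (mod p^k)"
    unfolding lat_rep_Zp_def zp3_mem_def zp_eq_def by (auto simp: lat_B_diagonal)
  obtain u where u: "zp_mem p u" "\<forall>k. [c * u k = 1] (mod p^k)"
    using zp_inverse_exists[OF assms] by blast
  define pre where "pre y al k = (y k - al) * u k" for y :: zp and al k
  have pre_mem: "zp_mem p (pre y al)" if "zp_mem p y" for y al
    using that u(1) by (simp add: pre_def zp_mem_def cong_mult cong_diff)
  have pre_inverse: "[c * pre y al k + al = y k] (mod p^k)" for y al k
  proof -
    have "[(c * u k) * (y k - al) + al = 1 * (y k - al) + al] (mod p^k)"
      using u(2) by (intro cong_add cong_mult cong_refl) auto
    then show ?thesis by (simp add: pre_def algebra_simps)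
  qed
  have "[gpol a1 a2 a3 c al1 al2 al3 (pre y1 al1 k) (pre y2 al2 k) (pre y3 al3 k) = N] (mod p^k)"
    for k
    using gpol_cong[OF pre_inverse pre_inverse pre_inverse] eq by (blast intro: cong_trans)
  then show "rep_Zp_g p a1 a2 a3 c al1 al2 al3 N"
    unfolding rep_Zp_g_def zp_eq_def using pre_mem y by blast
qed

theorem lemma3p4:
  fixes m a1 a2 a3 al1 al2 al3 :: int
  defines "c \<equiv> cpar m"
  assumes "m \<ge> 4"
    and "tight_regular_g a1 a2 a3 c al1 al2 al3"
    and "0 < a1" and "a1 \<le> a2" and "a2 \<le> a3"
    and "gcd a1 (gcd a2 a3) = 1"
    and "\<forall>p. prime p \<and> \<not> p dvd c \<longrightarrow> p_stable p a1 a2 a3"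
    and "0 < al1" and "2 * al1 < c"
    and "0 < al2" and "2 * al2 < c"
    and "0 < al3" and "2 * al3 < c"
    and "gcd c (al1 * al2 * al3) = 1"
  shows "min_g a1 a2 a3 c al1 al2 al3 = a1 * al1^2 + a2 * al2^2 + a3 * al3^2
    \<and> (\<forall>p n. prime p \<and> p dvd c \<and> n \<ge> 0 \<longrightarrow>
          rep_Zp_g p a1 a2 a3 c al1 al2 al3 (delta m * c * n + a1 * al1^2 + a2 * al2^2 + a3 * al3^2))
    \<and> (\<forall>p n. prime p \<and> \<not> p dvd c \<and> n \<ge> 0 \<longrightarrow>
          (rep_Zp_g p a1 a2 a3 c al1 al2 al3 (delta m * c * n + a1 * al1^2 + a2 * al2^2 + a3 * al3^2)
           \<longleftrightarrow> lat_rep_Zp p a1 a2 a3 (delta m * c * n + a1 * al1^2 + a2 * al2^2 + a3 * al3^2)))"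
proof (intro conjI allI impI)
  show "min_g a1 a2 a3 c al1 al2 al3 = a1 * al1^2 + a2 * al2^2 + a3 * al3^2"
    by (rule min_g_eq) (use assms in auto)
next
  fix p n :: int
  assume "prime p \<and> p dvd c \<and> n \<ge> 0"
  with \<open>gcd a1 (gcd a2 a3) = 1\<close> \<open>gcd c (al1 * al2 * al3) = 1\<close>
  show "rep_Zp_g p a1 a2 a3 c al1 al2 al3
      (delta m * c * n + a1 * al1^2 + a2 * al2^2 + a3 * al3^2)"
    unfolding c_def by (intro rep_Zp_g_beta_of_prime_dvd_cpar) auto
next
  fix p n :: int
  assume "prime p \<and> \<not> p dvd c \<and> n \<ge> 0"
  then have "0 < p" "coprime c p"
    by (auto simp: prime_gt_0_int coprime_commute[of c] prime_imp_coprime)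
  then show "rep_Zp_g p a1 a2 a3 c al1 al2 al3
      (delta m * c * n + a1 * al1^2 + a2 * al2^2 + a3 * al3^2)
    \<longleftrightarrow> lat_rep_Zp p a1 a2 a3 (delta m * c * n + a1 * al1^2 + a2 * al2^2 + a3 * al3^2)"
    by (rule rep_Zp_g_iff_lat_rep_Zp)
qed

end
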